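(* Let $q$ be a power of a prime $p$, let $k$ be an algebraically closed field of characteristic $p$, let $G=\mathrm{GL}_n(k)$ and $\mathfrak{g}=\mathfrak{gl}_n(k)$. Let $F:G\to G$ be the Frobenius endomorphism $F((g_{i,j}))=\big((g^q_{n+1-j,\,n+1-i})\big)^{-1}$ (the inverse of the matrix whose $(i,j)$ entry is $g_{n+1-j,n+1-i}^q$), and let $F:\mathfrak{g}\to\mathfrak{g}$ be given by $F((x_{i,j}))=(x^q_{n+1-j,\,n+1-i})$. Let $\alpha\in\mathbb{F}_{q^2}\setminus\mathbb{F}_q$ (viewed inside $k$). Then the map $s:G_{\mathrm{uni}}\to\mathfrak{g}_{\mathrm{nil}}$, $s(g)=(g-1)(\alpha-\alpha^q g)^{-1}$, is a $G$-equivariant (for conjugation on $G_{\mathrm{uni}}$ and the adjoint action on $\mathfrak{g}_{\mathrm{nil}}$) bijective morphism of varieties, with inverse $s^{-1}(x)=(1+\alpha^q x)^{-1}(\alpha x+1)$, and it satisfies $s(F(g))=F(s(g))$ for all $g\in G_{\mathrm{uni}}$.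
   Context: $G_{\mathrm{uni}}$ denotes the variety of unipotent elements of $G$ and $\mathfrak{g}_{\mathrm{nil}}$ the variety of nilpotent elements of $\mathfrak{g}$. *)

theory Defs
  imports "HOL-Computational_Algebra.Polynomial" "Jordan_Normal_Form.Determinant"
begin

text \<open>Two-sided inverse of a square matrix (arbitrary if none exists).\<close>
definition mat_inv :: "'a::field mat \<Rightarrow> 'a mat" where
  "mat_inv A = (SOME B. B \<in> carrier_mat (dim_row A) (dim_row A) \<and>
                        A * B = 1\<^sub>m (dim_row A) \<and> B * A = 1\<^sub>m (dim_row A))"

definition GL :: "nat \<Rightarrow> 'a::field mat set" where
  "GL n = {g. g \<in> carrier_mat n n \<and> det g \<noteq> 0}"

definition nil_mats :: "nat \<Rightarrow> 'a::field mat set" where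
  "nil_mats n = {x. x \<in> carrier_mat n n \<and> (\<exists>m. x ^\<^sub>m m = 0\<^sub>m n n)}"

definition uni_mats :: "nat \<Rightarrow> 'a::field mat set" where
  "uni_mats n = {g. g \<in> carrier_mat n n \<and> g - 1\<^sub>m n \<in> nil_mats n}"

inductive_set poly_fun :: "nat \<Rightarrow> ('a::comm_ring_1 mat \<Rightarrow> 'a) set" for n where
  pf_const: "(\<lambda>A. c) \<in> poly_fun n"
| pf_coord: "i < n \<Longrightarrow> j < n \<Longrightarrow> (\<lambda>A. A $$ (i,j)) \<in> poly_fun n"
| pf_add: "f \<in> poly_fun n \<Longrightarrow> g \<in> poly_fun n \<Longrightarrow> (\<lambda>A. f A + g A) \<in> poly_fun n"
| pf_mult: "f \<in> poly_fun n \<Longrightarrow> g \<in> poly_fun n \<Longrightarrow> (\<lambda>A. f A * g A) \<in> poly_fun n"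

text \<open>Morphism of (closed, affine) subvarieties X of M_n into M_n: every entry of the
  image is the restriction to X of a polynomial in the entries.\<close>
definition is_morphism :: "nat \<Rightarrow> 'a::comm_ring_1 mat set \<Rightarrow> ('a mat \<Rightarrow> 'a mat) \<Rightarrow> bool" where
  "is_morphism n X f \<longleftrightarrow> (\<forall>A\<in>X. f A \<in> carrier_mat n n) \<and>
     (\<forall>i<n. \<forall>j<n. \<exists>P\<in>poly_fun n. \<forall>A\<in>X. f A $$ (i,j) = P A)"

text \<open>Frobenius maps (0-based indices: n+1-j becomes n-1-j).\<close>
definition frob_G :: "nat \<Rightarrow> nat \<Rightarrow> 'a::field mat \<Rightarrow> 'a mat" where
  "frob_G n q g = mat_inv (mat n n (\<lambda>(i,j). (g $$ (n - 1 - j, n - 1 - i)) ^ q))"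

definition frob_g :: "nat \<Rightarrow> nat \<Rightarrow> 'a::field mat \<Rightarrow> 'a mat" where
  "frob_g n q x = mat n n (\<lambda>(i,j). (x $$ (n - 1 - j, n - 1 - i)) ^ q)"

definition s_map :: "nat \<Rightarrow> nat \<Rightarrow> 'a::field \<Rightarrow> 'a mat \<Rightarrow> 'a mat" where
  "s_map n q \<alpha> g = (g - 1\<^sub>m n) * mat_inv (\<alpha> \<cdot>\<^sub>m 1\<^sub>m n - (\<alpha> ^ q) \<cdot>\<^sub>m g)"

definition s_inv_map :: "nat \<Rightarrow> nat \<Rightarrow> 'a::field \<Rightarrow> 'a mat \<Rightarrow> 'a mat" where
  "s_inv_map n q \<alpha> x = mat_inv (1\<^sub>m n + (\<alpha> ^ q) \<cdot>\<^sub>m x) * (\<alpha> \<cdot>\<^sub>m x + 1\<^sub>m n)"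

end

theory Submission
  imports Defs "HOL-Computational_Algebra.Primes"
begin

text \<open>Let \<open>c = \<alpha> - \<alpha>^q\<close>, which is nonzero. For unipotent \<open>g\<close> put \<open>N = g - 1\<close>; then
  \<open>\<alpha> - \<alpha>^q g = c - \<alpha>^q N\<close> is a nonzero scalar minus a nilpotent matrix. As \<open>N^n = 0\<close>, its
  inverse is the truncated geometric series \<open>c\<^sup>-\<^sup>1 (1 + M + \<dots> + M^(n-1))\<close> with \<open>M = \<alpha>^q N / c\<close>:
  a polynomial in the entries of \<open>g\<close> that commutes with \<open>g\<close>. Hence \<open>s\<close> is a morphism and
  \<open>s(g)\<close>, a product of commuting factors one of which is nilpotent, is nilpotent. The identities
  \<open>1 + \<alpha>^q s(g) = c (\<alpha> - \<alpha>^q g)\<^sup>-\<^sup>1\<close> and \<open>\<alpha> s(g) + 1 = c g (\<alpha> - \<alpha>^q g)\<^sup>-\<^sup>1\<close> give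
  \<open>s\<^sup>-\<^sup>1(s(g)) = g\<close>, and the mirror identities for \<open>y = s\<^sup>-\<^sup>1(x)\<close> give \<open>s(y) = x\<close> for nilpotent
  \<open>x\<close>. Conjugation is a ring automorphism, so \<open>s\<close> is equivariant. The Lie algebra Frobenius
  \<open>\<sigma>\<close> is a ring anti-automorphism raising scalars to the \<open>q\<close>-th power, and the group Frobenius
  is \<open>g \<mapsto> \<sigma>(g)\<^sup>-\<^sup>1\<close>. Since \<open>\<alpha>^(q^2) = \<alpha>\<close>, \<open>\<sigma>\<close> maps \<open>\<alpha> - \<alpha>^q g\<close> to \<open>\<alpha>^q - \<alpha> k\<close> with
  \<open>k = \<sigma>(g)\<close>, and both \<open>s(k\<^sup>-\<^sup>1)\<close> and \<open>\<sigma>(s(g))\<close> equal \<open>(k - 1) (\<alpha>^q - \<alpha> k)\<^sup>-\<^sup>1\<close>.\<close>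

declare minus_carrier_mat [simp]

section \<open>Inverses of square matrices\<close>

lemma mat_inv_eqI:
  fixes A B :: "'a::field mat"
  assumes A: "A \<in> carrier_mat n n" and B: "B \<in> carrier_mat n n" and AB: "A * B = 1\<^sub>m n"
  shows "mat_inv A = B"
proof -
  have BA: "B * A = 1\<^sub>m n" by (rule mat_mult_left_right_inverse[OF A B AB])
  have unique: "C = B" if C: "C \<in> carrier_mat n n" "C * A = 1\<^sub>m n" for C
  proof -
    have "C = C * (A * B)" using C by (simp add: AB)
    also have "\<dots> = (C * A) * B" using A B C(1) by simp
    also have "\<dots> = B" using B C by simp
    finally show ?thesis .
  qed
  show ?thesis
    unfolding mat_inv_def carrier_matD(1)[OF A]
    by (rule some_equality) (use B AB BA unique in blast)+
qed

lemma det_nonzero_if_right_inverse: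
  fixes A B :: "'a::field mat"
  assumes "A \<in> carrier_mat n n" "B \<in> carrier_mat n n" "A * B = 1\<^sub>m n"
  shows "det A \<noteq> 0"
  using det_mult[OF assms(1,2)] assms(3) by auto

lemma
  fixes A :: "'a::field mat"
  assumes A: "A \<in> carrier_mat n n" and det: "det A \<noteq> 0"
  shows mat_inv_carrier: "mat_inv A \<in> carrier_mat n n"
    and mult_mat_inv: "A * mat_inv A = 1\<^sub>m n"
    and mat_inv_mult: "mat_inv A * A = 1\<^sub>m n"
proof -
  obtain B where B: "B \<in> carrier_mat n n" "A * B = 1\<^sub>m n"
    using det_non_zero_imp_unit[OF A det, of "()"] unfolding Units_def by (auto simp: ring_mat_simps)
  then show "mat_inv A \<in> carrier_mat n n" "A * mat_inv A = 1\<^sub>m n" "mat_inv A * A = 1\<^sub>m n"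
    using mat_inv_eqI[OF A B] mat_mult_left_right_inverse[OF A] by auto
qed

lemma
  fixes A :: "'a::field mat"
  assumes A: "A \<in> carrier_mat n n" and det: "det A \<noteq> 0"
  shows det_mat_inv_nonzero: "det (mat_inv A) \<noteq> 0"
    and mat_inv_mat_inv: "mat_inv (mat_inv A) = A"
  using det_nonzero_if_right_inverse[OF mat_inv_carrier[OF A det] A mat_inv_mult[OF A det]]
    mat_inv_eqI[OF mat_inv_carrier[OF A det] A mat_inv_mult[OF A det]] by auto

lemma mat_inv_commute:
  fixes A X :: "'a::field mat"
  assumes A: "A \<in> carrier_mat n n" "det A \<noteq> 0" and X: "X \<in> carrier_mat n n"
    and XA: "X * A = A * X"
  shows "X * mat_inv A = mat_inv A * X"
proof -
  let ?B = "mat_inv A"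
  have B: "?B \<in> carrier_mat n n" by (rule mat_inv_carrier[OF A])
  have "X * ?B = (?B * A) * (X * ?B)" using X B by (simp add: mat_inv_mult[OF A])
  also have "\<dots> = ?B * (A * X) * ?B" using A X B by (simp add: assoc_mult_mat[of _ n n _ n _ n])
  also have "\<dots> = ?B * X * (A * ?B)"
    using A X B by (simp add: XA[symmetric] assoc_mult_mat[of _ n n _ n _ n])
  also have "\<dots> = ?B * X" using X B by (simp add: mult_mat_inv[OF A])
  finally show ?thesis .
qed

lemma mat_inv_smult:
  fixes A :: "'a::field mat"
  assumes A: "A \<in> carrier_mat n n" "det A \<noteq> 0" and c: "c \<noteq> 0"
  shows "mat_inv (c \<cdot>\<^sub>m A) = (1 / c) \<cdot>\<^sub>m mat_inv A"
  using A c mat_inv_carrier[OF A] mult_mat_inv[OF A]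
  by (intro mat_inv_eqI) (auto simp: mult_smult_distrib[of _ n n] mult_smult_assoc_mat[of _ n n])

lemma mat_inv_conj:
  fixes h A :: "'a::field mat"
  assumes h: "h \<in> carrier_mat n n" "det h \<noteq> 0" and A: "A \<in> carrier_mat n n" "det A \<noteq> 0"
  shows "mat_inv (h * A * mat_inv h) = h * mat_inv A * mat_inv h"
proof (rule mat_inv_eqI)
  let ?H = "mat_inv h" and ?B = "mat_inv A"
  have H: "?H \<in> carrier_mat n n" and B: "?B \<in> carrier_mat n n"
    using mat_inv_carrier h A by auto
  have "h * A * ?H * (h * ?B * ?H) = h * (A * (?H * h) * ?B) * ?H"
    using h A H B by (simp add: assoc_mult_mat[of _ n n _ n _ n])
  also have "\<dots> = 1\<^sub>m n"
    using h A H B by (simp add: mat_inv_mult[OF h] mult_mat_inv[OF A] mult_mat_inv[OF h])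
  finally show "h * A * ?H * (h * ?B * ?H) = 1\<^sub>m n" .
qed (use h A mat_inv_carrier[OF h] mat_inv_carrier[OF A] in auto)

lemma conj_mult_conj:
  fixes h H X Y :: "'a::semiring_1 mat"
  assumes "h \<in> carrier_mat n n" "H \<in> carrier_mat n n" "X \<in> carrier_mat n n" "Y \<in> carrier_mat n n"
    and "H * h = 1\<^sub>m n"
  shows "(h * X * H) * (h * Y * H) = h * (X * Y) * H"
proof -
  have "(h * X * H) * (h * Y * H) = h * X * ((H * h) * Y * H)"
    using assms(1-4) by (simp add: assoc_mult_mat[of _ n n _ n _ n])
  then show ?thesis using assms by (simp add: assoc_mult_mat[of _ n n _ n _ n])
qed

lemma GL_D:
  fixes h :: "'a::field mat"
  assumes "h \<in> GL n"
  shows "h \<in> carrier_mat n n" "det h \<noteq> 0"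
  using assms unfolding GL_def by auto

section \<open>Polynomial maps\<close>

definition poly_on :: "nat \<Rightarrow> 'a::comm_ring_1 mat set \<Rightarrow> ('a mat \<Rightarrow> 'a) \<Rightarrow> bool" where
  "poly_on n X f \<longleftrightarrow> (\<exists>P\<in>poly_fun n. \<forall>A\<in>X. f A = P A)"

lemma poly_on_const: "poly_on n X (\<lambda>A. c)"
  unfolding poly_on_def by (intro bexI[of _ "\<lambda>A. c"]) (auto intro: poly_fun.pf_const)

lemma poly_on_entry: "i < n \<Longrightarrow> j < n \<Longrightarrow> poly_on n X (\<lambda>A. A $$ (i, j))"
  unfolding poly_on_def by (intro bexI[of _ "\<lambda>A. A $$ (i, j)"]) (auto intro: poly_fun.pf_coord)

lemma poly_on_add:
  assumes "poly_on n X f" and "poly_on n X g"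
  shows "poly_on n X (\<lambda>A. f A + g A)"
proof -
  obtain P Q where "P \<in> poly_fun n" "\<forall>A\<in>X. f A = P A" "Q \<in> poly_fun n" "\<forall>A\<in>X. g A = Q A"
    using assms unfolding poly_on_def by blast
  then show ?thesis
    unfolding poly_on_def by (intro bexI[of _ "\<lambda>A. P A + Q A"]) (auto intro: poly_fun.pf_add)
qed

lemma poly_on_mult:
  assumes "poly_on n X f" and "poly_on n X g"
  shows "poly_on n X (\<lambda>A. f A * g A)"
proof -
  obtain P Q where "P \<in> poly_fun n" "\<forall>A\<in>X. f A = P A" "Q \<in> poly_fun n" "\<forall>A\<in>X. g A = Q A"
    using assms unfolding poly_on_def by blast
  then show ?thesis
    unfolding poly_on_def by (intro bexI[of _ "\<lambda>A. P A * Q A"]) (auto intro: poly_fun.pf_mult)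
qed

lemma poly_on_sum:
  assumes "finite K" and "\<And>k. k \<in> K \<Longrightarrow> poly_on n X (f k)"
  shows "poly_on n X (\<lambda>A. \<Sum>k\<in>K. f k A)"
  using assms
proof (induction K rule: finite_induct)
  case empty
  show ?case by (simp add: poly_on_const)
next
  case (insert k K)
  have "poly_on n X (\<lambda>A. f k A + (\<Sum>k\<in>K. f k A))"
    using insert.prems insert.IH by (intro poly_on_add) auto
  then show ?case using insert.hyps by simp
qed

lemma poly_on_cong: "poly_on n X f \<Longrightarrow> (\<And>A. A \<in> X \<Longrightarrow> g A = f A) \<Longrightarrow> poly_on n X g"
  unfolding poly_on_def by auto

lemma is_morphismI:
  assumes "\<And>A. A \<in> X \<Longrightarrow> F A \<in> carrier_mat n n"
    and "\<And>i j. i < n \<Longrightarrow> j < n \<Longrightarrow> poly_on n X (\<lambda>A. F A $$ (i, j))"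
  shows "is_morphism n X F"
  using assms unfolding is_morphism_def poly_on_def by blast

lemma is_morphism_carrier: "is_morphism n X F \<Longrightarrow> A \<in> X \<Longrightarrow> F A \<in> carrier_mat n n"
  unfolding is_morphism_def by blast

lemma is_morphism_poly_on:
  "is_morphism n X F \<Longrightarrow> i < n \<Longrightarrow> j < n \<Longrightarrow> poly_on n X (\<lambda>A. F A $$ (i, j))"
  unfolding is_morphism_def poly_on_def by blast

lemma is_morphism_cong:
  "is_morphism n X F \<Longrightarrow> (\<And>A. A \<in> X \<Longrightarrow> G A = F A) \<Longrightarrow> is_morphism n X G"
  unfolding is_morphism_def by auto

lemma is_morphism_const: "C \<in> carrier_mat n n \<Longrightarrow> is_morphism n X (\<lambda>A. C)"
  by (rule is_morphismI) (simp_all only: poly_on_const)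

lemma is_morphism_id: "X \<subseteq> carrier_mat n n \<Longrightarrow> is_morphism n X (\<lambda>A. A)"
  by (rule is_morphismI) (auto intro: poly_on_entry)

lemma is_morphism_add:
  assumes F: "is_morphism n X F" and G: "is_morphism n X G"
  shows "is_morphism n X (\<lambda>A. F A + G A)"
proof (rule is_morphismI)
  fix i j assume ij: "i < n" "j < n"
  show "poly_on n X (\<lambda>A. (F A + G A) $$ (i, j))"
  proof (rule poly_on_cong[OF poly_on_add[OF is_morphism_poly_on[OF F ij] is_morphism_poly_on[OF G ij]]])
    fix A assume A: "A \<in> X"
    show "(F A + G A) $$ (i, j) = F A $$ (i, j) + G A $$ (i, j)"
      using is_morphism_carrier[OF F A] is_morphism_carrier[OF G A] ij by simp
  qed
qed (use is_morphism_carrier[OF F] is_morphism_carrier[OF G] in simp)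

lemma is_morphism_smult:
  assumes F: "is_morphism n X F"
  shows "is_morphism n X (\<lambda>A. c \<cdot>\<^sub>m F A)"
proof (rule is_morphismI)
  fix i j assume ij: "i < n" "j < n"
  show "poly_on n X (\<lambda>A. (c \<cdot>\<^sub>m F A) $$ (i, j))"
  proof (rule poly_on_cong[OF poly_on_mult[OF poly_on_const is_morphism_poly_on[OF F ij]]])
    fix A assume A: "A \<in> X"
    show "(c \<cdot>\<^sub>m F A) $$ (i, j) = c * F A $$ (i, j)"
      using is_morphism_carrier[OF F A] ij by simp
  qed
qed (use is_morphism_carrier[OF F] in simp)

lemma is_morphism_diff:
  fixes F G :: "'a::comm_ring_1 mat \<Rightarrow> 'a mat"
  assumes F: "is_morphism n X F" and G: "is_morphism n X G"
  shows "is_morphism n X (\<lambda>A. F A - G A)"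
proof (rule is_morphism_cong[OF is_morphism_add[OF F is_morphism_smult[OF G, of "-1"]]])
  fix A assume A: "A \<in> X"
  show "F A - G A = F A + (-1) \<cdot>\<^sub>m G A"
    using is_morphism_carrier[OF F A] is_morphism_carrier[OF G A] by (auto intro!: eq_matI)
qed

lemma is_morphism_mult:
  assumes F: "is_morphism n X F" and G: "is_morphism n X G"
  shows "is_morphism n X (\<lambda>A. F A * G A)"
proof (rule is_morphismI)
  fix i j assume ij: "i < n" "j < n"
  have "poly_on n X (\<lambda>A. \<Sum>k\<in>{0..<n}. F A $$ (i, k) * G A $$ (k, j))"
    using is_morphism_poly_on[OF F] is_morphism_poly_on[OF G] ij
    by (intro poly_on_sum poly_on_mult) auto
  then show "poly_on n X (\<lambda>A. (F A * G A) $$ (i, j))"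
  proof (rule poly_on_cong)
    fix A assume A: "A \<in> X"
    show "(F A * G A) $$ (i, j) = (\<Sum>k\<in>{0..<n}. F A $$ (i, k) * G A $$ (k, j))"
      using is_morphism_carrier[OF F A] is_morphism_carrier[OF G A] ij by (simp add: scalar_prod_def)
  qed
qed (use is_morphism_carrier[OF F] is_morphism_carrier[OF G] in \<open>blast intro: mult_carrier_mat\<close>)

lemma smult_smult_mat: "a \<cdot>\<^sub>m (b \<cdot>\<^sub>m A) = (a * b) \<cdot>\<^sub>m (A :: 'a::semigroup_mult mat)"
  by (rule eq_matI) (auto simp: mult.assoc)

lemma one_smult_mat: "1 \<cdot>\<^sub>m A = (A :: 'a::monoid_mult mat)"
  by (rule eq_matI) auto

lemma minus_add_minus_mat:
  fixes A B C :: "'a::ab_group_add mat"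
  assumes "A \<in> carrier_mat nr nc" "B \<in> carrier_mat nr nc" "C \<in> carrier_mat nr nc"
  shows "(A - B) + (B - C) = A - C"
  using assms by (intro eq_matI) auto

lemma pow_mat_mult_commute:
  fixes A B :: "'a::comm_ring_1 mat"
  assumes A: "A \<in> carrier_mat n n" and B: "B \<in> carrier_mat n n" and AB: "A * B = B * A"
  shows "(A * B) ^\<^sub>m k = A ^\<^sub>m k * B ^\<^sub>m k"
proof -
  let ?R = "ring_mat TYPE('a) n ()"
  interpret R: ring ?R by (rule ring_mat)
  have "(A * B) ^\<^sub>m k = (A \<otimes>\<^bsub>?R\<^esub> B) [^]\<^bsub>?R\<^esub> k"
    using pow_mat_ring_pow[of "A * B" n k "()"] A B unfolding ring_mat_simps by simp
  also have "\<dots> = A [^]\<^bsub>?R\<^esub> k \<otimes>\<^bsub>?R\<^esub> B [^]\<^bsub>?R\<^esub> k"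
    by (rule R.pow_mult_distrib) (use A B AB in \<open>unfold ring_mat_simps\<close>)
  also have "\<dots> = A ^\<^sub>m k * B ^\<^sub>m k"
    unfolding ring_mat_simps pow_mat_ring_pow[OF A, symmetric] pow_mat_ring_pow[OF B, symmetric] ..
  finally show ?thesis .
qed

lemma pow_mat_add:
  fixes A :: "'a::comm_ring_1 mat"
  assumes A: "A \<in> carrier_mat n n"
  shows "A ^\<^sub>m (i + j) = A ^\<^sub>m i * A ^\<^sub>m j"
proof -
  let ?R = "ring_mat TYPE('a) n ()"
  interpret R: ring ?R by (rule ring_mat)
  have "A ^\<^sub>m (i + j) = A [^]\<^bsub>?R\<^esub> (i + j)" by (rule pow_mat_ring_pow[OF A])
  also have "\<dots> = A [^]\<^bsub>?R\<^esub> i \<otimes>\<^bsub>?R\<^esub> A [^]\<^bsub>?R\<^esub> j"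
    by (rule R.nat_pow_mult[symmetric]) (use A in \<open>unfold ring_mat_simps\<close>)
  also have "\<dots> = A ^\<^sub>m i * A ^\<^sub>m j"
    unfolding ring_mat_simps pow_mat_ring_pow[OF A, symmetric] ..
  finally show ?thesis .
qed

context
  fixes n :: nat
begin

lemmas square_mat_simps =
  mult_carrier_mat[of _ n n _ n]
  add_mult_distrib_mat[of _ n n _ _ n] mult_add_distrib_mat[of _ n n _ n]
  minus_mult_distrib_mat[of _ n n _ _ n] mult_minus_distrib_mat[of _ n n _ n]
  mult_smult_distrib[of _ n n _ n] mult_smult_assoc_mat[of _ n n _ n]

lemma smult_mult_smult_mat:
  fixes A B :: "'a::comm_ring_1 mat"
  assumes "A \<in> carrier_mat n n" "B \<in> carrier_mat n n"
  shows "(a \<cdot>\<^sub>m A) * (b \<cdot>\<^sub>m B) = (a * b) \<cdot>\<^sub>m (A * B)"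
  using assms by (simp add: square_mat_simps smult_smult_mat ac_simps)

lemma pow_mat_Suc_left:
  fixes A :: "'a::comm_ring_1 mat"
  assumes "A \<in> carrier_mat n n"
  shows "A ^\<^sub>m Suc k = A * A ^\<^sub>m k"
  using pow_mat_add[OF assms, of 1 k] assms by simp

lemma pow_mat_smult:
  fixes A :: "'a::comm_ring_1 mat"
  assumes A: "A \<in> carrier_mat n n"
  shows "(c \<cdot>\<^sub>m A) ^\<^sub>m k = c ^ k \<cdot>\<^sub>m A ^\<^sub>m k"
proof (induction k)
  case (Suc k)
  then show ?case using A by (simp add: square_mat_simps smult_smult_mat)
qed (use A in \<open>auto intro!: eq_matI\<close>)

section \<open>Nilpotent matrices\<close>

fun geom_series_mat :: "'a::comm_ring_1 mat \<Rightarrow> nat \<Rightarrow> 'a mat" where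
  "geom_series_mat M 0 = 0\<^sub>m n n"
| "geom_series_mat M (Suc k) = 1\<^sub>m n + M * geom_series_mat M k"

lemma geom_series_mat_carrier: "M \<in> carrier_mat n n \<Longrightarrow> geom_series_mat M k \<in> carrier_mat n n"
  by (induction k) auto

lemma one_minus_mult_geom_series_mat:
  fixes M :: "'a::comm_ring_1 mat"
  assumes M: "M \<in> carrier_mat n n"
  shows "(1\<^sub>m n - M) * geom_series_mat M k = 1\<^sub>m n - M ^\<^sub>m k"
proof (induction k)
  case 0
  then show ?case using M by (auto intro!: eq_matI)
next
  case (Suc k)
  have G: "geom_series_mat M k \<in> carrier_mat n n" by (rule geom_series_mat_carrier[OF M])
  have "(1\<^sub>m n - M) * geom_series_mat M (Suc k) = (1\<^sub>m n - M) + M * ((1\<^sub>m n - M) * geom_series_mat M k)"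
    using M G by (simp add: square_mat_simps)
  also have "\<dots> = (1\<^sub>m n - M) + (M - M * M ^\<^sub>m k)"
    using M by (simp add: Suc square_mat_simps)
  also have "\<dots> = 1\<^sub>m n - M * M ^\<^sub>m k"
    by (rule minus_add_minus_mat[of _ n n]) (use M in auto)
  also have "M * M ^\<^sub>m k = M ^\<^sub>m Suc k" by (rule pow_mat_Suc_left[OF M, symmetric])
  finally show ?case .
qed

lemma scalar_minus_nilpotent_right_inverse:
  fixes N :: "'a::field mat"
  assumes N: "N \<in> carrier_mat n n" and nil: "N ^\<^sub>m k = 0\<^sub>m n n" and c: "c \<noteq> 0"
  shows "(c \<cdot>\<^sub>m 1\<^sub>m n - N) * ((1 / c) \<cdot>\<^sub>m geom_series_mat ((1 / c) \<cdot>\<^sub>m N) k) = 1\<^sub>m n"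
proof -
  let ?M = "(1 / c) \<cdot>\<^sub>m N"
  have M: "?M \<in> carrier_mat n n" using N by simp
  have G: "geom_series_mat ?M k \<in> carrier_mat n n" by (rule geom_series_mat_carrier[OF M])
  have "c \<cdot>\<^sub>m 1\<^sub>m n - N = c \<cdot>\<^sub>m (1\<^sub>m n - ?M)"
    using N c by (auto intro!: eq_matI simp: field_simps)
  then have "(c \<cdot>\<^sub>m 1\<^sub>m n - N) * ((1 / c) \<cdot>\<^sub>m geom_series_mat ?M k)
      = (c * (1 / c)) \<cdot>\<^sub>m ((1\<^sub>m n - ?M) * geom_series_mat ?M k)"
    using M G by (simp only: smult_mult_smult_mat minus_carrier_mat one_carrier_mat)
  also have "\<dots> = 1\<^sub>m n"
    using c N by (simp add: one_minus_mult_geom_series_mat[OF M] pow_mat_smult nil one_smult_mat)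
      (auto intro!: eq_matI)
  finally show ?thesis .
qed

lemma
  fixes N :: "'a::field mat"
  assumes N: "N \<in> carrier_mat n n" and nil: "N ^\<^sub>m k = 0\<^sub>m n n" and c: "c \<noteq> 0"
  shows det_scalar_minus_nilpotent: "det (c \<cdot>\<^sub>m 1\<^sub>m n - N) \<noteq> 0"
    and mat_inv_scalar_minus_nilpotent:
      "mat_inv (c \<cdot>\<^sub>m 1\<^sub>m n - N) = (1 / c) \<cdot>\<^sub>m geom_series_mat ((1 / c) \<cdot>\<^sub>m N) k"
proof -
  let ?B = "(1 / c) \<cdot>\<^sub>m geom_series_mat ((1 / c) \<cdot>\<^sub>m N) k"
  have A: "c \<cdot>\<^sub>m 1\<^sub>m n - N \<in> carrier_mat n n" and B: "?B \<in> carrier_mat n n"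
    using N by (simp_all add: geom_series_mat_carrier)
  note AB = scalar_minus_nilpotent_right_inverse[OF N nil c]
  show "det (c \<cdot>\<^sub>m 1\<^sub>m n - N) \<noteq> 0" by (rule det_nonzero_if_right_inverse[OF A B AB])
  show "mat_inv (c \<cdot>\<^sub>m 1\<^sub>m n - N) = ?B" by (rule mat_inv_eqI[OF A B AB])
qed

lemma mult_commute_scalar_minus_smult:
  fixes X :: "'a::comm_ring_1 mat"
  assumes X: "X \<in> carrier_mat n n"
  shows "X * (a \<cdot>\<^sub>m 1\<^sub>m n - b \<cdot>\<^sub>m X) = (a \<cdot>\<^sub>m 1\<^sub>m n - b \<cdot>\<^sub>m X) * X"
  using X by (simp add: square_mat_simps)

lemma nil_mats_mult_commute:
  fixes x y :: "'a::field mat"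
  assumes x: "x \<in> nil_mats n" and y: "y \<in> carrier_mat n n" and xy: "x * y = y * x"
  shows "x * y \<in> nil_mats n"
proof -
  obtain k where xc: "x \<in> carrier_mat n n" and k: "x ^\<^sub>m k = 0\<^sub>m n n"
    using x unfolding nil_mats_def by blast
  have "(x * y) ^\<^sub>m k = 0\<^sub>m n n"
    using y by (simp add: pow_mat_mult_commute[OF xc y xy] k)
  then show ?thesis using xc y unfolding nil_mats_def by auto
qed

lemma nil_mats_smult:
  fixes x :: "'a::field mat"
  assumes "x \<in> nil_mats n"
  shows "c \<cdot>\<^sub>m x \<in> nil_mats n"
proof -
  obtain k where x: "x \<in> carrier_mat n n" and k: "x ^\<^sub>m k = 0\<^sub>m n n"
    using assms unfolding nil_mats_def by blast
  have "(c \<cdot>\<^sub>m x) ^\<^sub>m k = 0\<^sub>m n n" by (simp add: pow_mat_smult[OF x] k)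
  then show ?thesis using x unfolding nil_mats_def by auto
qed

lemma
  fixes x :: "'a::field mat"
  assumes x: "x \<in> nil_mats n"
  shows det_one_plus_smult_nil_mats: "det (1\<^sub>m n + d \<cdot>\<^sub>m x) \<noteq> 0"
    and mat_inv_one_plus_smult_nil_mats_commute:
      "x * mat_inv (1\<^sub>m n + d \<cdot>\<^sub>m x) = mat_inv (1\<^sub>m n + d \<cdot>\<^sub>m x) * x"
proof -
  obtain k where xc: "x \<in> carrier_mat n n" and "x ^\<^sub>m k = 0\<^sub>m n n"
    using x unfolding nil_mats_def by blast
  then have nil: "((- d) \<cdot>\<^sub>m x) ^\<^sub>m k = 0\<^sub>m n n" by (simp add: pow_mat_smult)
  have "1\<^sub>m n + d \<cdot>\<^sub>m x = 1 \<cdot>\<^sub>m 1\<^sub>m n - (- d) \<cdot>\<^sub>m x" using xc by (auto intro!: eq_matI)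
  also have "det \<dots> \<noteq> 0" by (rule det_scalar_minus_nilpotent) (use xc nil in simp_all)
  finally show det: "det (1\<^sub>m n + d \<cdot>\<^sub>m x) \<noteq> 0" .
  have E: "1\<^sub>m n + d \<cdot>\<^sub>m x \<in> carrier_mat n n" using xc by simp
  have "x * (1\<^sub>m n + d \<cdot>\<^sub>m x) = (1\<^sub>m n + d \<cdot>\<^sub>m x) * x" using xc by (simp add: square_mat_simps)
  then show "x * mat_inv (1\<^sub>m n + d \<cdot>\<^sub>m x) = mat_inv (1\<^sub>m n + d \<cdot>\<^sub>m x) * x"
    by (rule mat_inv_commute[OF E det xc])
qed

lemma wide_mat_kernel_nontrivial:
  fixes W :: "'a::field mat"
  assumes W: "W \<in> carrier_mat n (Suc n)"
  shows "\<exists>c \<in> carrier_vec (Suc n). c \<noteq> 0\<^sub>v (Suc n) \<and> W *\<^sub>v c = 0\<^sub>v n"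
proof -
  define W' where "W' = mat (Suc n) (Suc n) (\<lambda>(r, i). if r < n then W $$ (r, i) else 0)"
  have W': "W' \<in> carrier_mat (Suc n) (Suc n)" by (simp add: W'_def)
  have "W' = mat\<^sub>r (Suc n) (Suc n) (\<lambda>r. if r = n then 0\<^sub>v (Suc n) else row W' r)"
    unfolding W'_def by (intro eq_matI) auto
  also have "det \<dots> = 0" by (rule det_row_0) (auto simp: W'_def)
  finally obtain c where c: "c \<in> carrier_vec (Suc n)" "c \<noteq> 0\<^sub>v (Suc n)" "W' *\<^sub>v c = 0\<^sub>v (Suc n)"
    using det_0_iff_vec_prod_zero_field[OF W'] by auto
  have "W *\<^sub>v c = 0\<^sub>v n"
  proof (rule eq_vecI)
    fix r assume "r < dim_vec (0\<^sub>v n :: 'a vec)"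
    then have "(W *\<^sub>v c) $ r = (W' *\<^sub>v c) $ r"
      using W c(1) by (simp add: W'_def scalar_prod_def)
    then show "(W *\<^sub>v c) $ r = 0\<^sub>v n $ r" using c(3) \<open>r < _\<close> by simp
  qed (use W in simp)
  with c show ?thesis by blast
qed

lemma least_nonzero_index_vec:
  fixes c :: "'a::zero vec"
  assumes "c \<in> carrier_vec m" and "c \<noteq> 0\<^sub>v m"
  shows "\<exists>j < m. c $ j \<noteq> 0 \<and> (\<forall>i < j. c $ i = 0)"
proof -
  obtain i where i: "i < m" "c $ i \<noteq> 0"
  proof (rule ccontr)
    assume "\<not> thesis"
    then have "c = 0\<^sub>v m" using that assms(1) by (intro eq_vecI) auto
    with assms(2) show False ..
  qed
  define j where "j = (LEAST i. c $ i \<noteq> 0)"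
  have "j \<le> i" "c $ j \<noteq> 0"
    using i Least_le[of "\<lambda>i. c $ i \<noteq> 0" i] LeastI[of "\<lambda>i. c $ i \<noteq> 0" i] unfolding j_def by auto
  moreover have "c $ i' = 0" if "i' < j" for i'
    using not_less_Least[of i' "\<lambda>i. c $ i \<noteq> 0"] that unfolding j_def by blast
  ultimately show ?thesis using i(1) by (intro exI[of _ j]) auto
qed

definition krylov_mat :: "'a::semiring_1 mat \<Rightarrow> 'a vec \<Rightarrow> nat \<Rightarrow> 'a mat" where
  "krylov_mat N v m = mat n m (\<lambda>(r, i). (N ^\<^sub>m i *\<^sub>v v) $ r)"

lemma pow_mat_mult_krylov_mat:
  fixes N :: "'a::comm_ring_1 mat"
  assumes N: "N \<in> carrier_mat n n" and v: "v \<in> carrier_vec n"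
  shows "N ^\<^sub>m t * krylov_mat N v m = mat n m (\<lambda>(r, i). (N ^\<^sub>m (t + i) *\<^sub>v v) $ r)"
proof (rule eq_matI)
  fix r i assume "r < dim_row (mat n m (\<lambda>(r, i). (N ^\<^sub>m (t + i) *\<^sub>v v) $ r))"
    and "i < dim_col (mat n m (\<lambda>(r, i). (N ^\<^sub>m (t + i) *\<^sub>v v) $ r))"
  then have ri: "r < n" "i < m" by auto
  have col: "col (krylov_mat N v m) i = N ^\<^sub>m i *\<^sub>v v"
    using N v ri by (intro eq_vecI) (auto simp: krylov_mat_def)
  have "(N ^\<^sub>m t * krylov_mat N v m) $$ (r, i) = (N ^\<^sub>m t *\<^sub>v col (krylov_mat N v m) i) $ r"
    using N ri by (simp add: krylov_mat_def)
  also have "N ^\<^sub>m t *\<^sub>v col (krylov_mat N v m) i = N ^\<^sub>m (t + i) *\<^sub>v v"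
    using N v by (simp add: col pow_mat_add assoc_mult_mat_vec[of _ n n _ n])
  finally show "(N ^\<^sub>m t * krylov_mat N v m) $$ (r, i)
      = mat n m (\<lambda>(r, i). (N ^\<^sub>m (t + i) *\<^sub>v v) $ r) $$ (r, i)"
    using ri by simp
qed (use N in \<open>auto simp: krylov_mat_def\<close>)

lemma nilpotent_pow_dim_mult_vec:
  fixes N :: "'a::field mat"
  assumes N: "N \<in> carrier_mat n n" and nil: "N ^\<^sub>m k = 0\<^sub>m n n" and v: "v \<in> carrier_vec n"
  shows "N ^\<^sub>m n *\<^sub>v v = 0\<^sub>v n"
proof -
  \<comment> \<open>The vectors \<open>N\<^sup>i v\<close>, \<open>i \<le> n\<close>, are dependent. If \<open>j\<close> is the least index with a nonzero
    coefficient, applying \<open>N\<^sup>r\<^sup>-\<^sup>j\<close> to the relation shows \<open>N\<^sup>r v = 0\<close> for every \<open>r \<ge> j\<close>,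
    by descending induction on \<open>r\<close> starting from \<open>r \<ge> k\<close>.\<close>
  let ?W = "krylov_mat N v (Suc n)"
  obtain c where c: "c \<in> carrier_vec (Suc n)" "c \<noteq> 0\<^sub>v (Suc n)" "?W *\<^sub>v c = 0\<^sub>v n"
    using wide_mat_kernel_nontrivial[of ?W] by (auto simp: krylov_mat_def)
  obtain j where j: "j < Suc n" "c $ j \<noteq> 0" and below_j: "\<And>i. i < j \<Longrightarrow> c $ i = 0"
    using least_nonzero_index_vec[OF c(1,2)] by blast
  have shifted: "(\<Sum>i<Suc n. (N ^\<^sub>m (t + i) *\<^sub>v v) $ r * c $ i) = 0" if r: "r < n" for t r
  proof -
    have "(N ^\<^sub>m t * ?W) *\<^sub>v c = N ^\<^sub>m t *\<^sub>v (?W *\<^sub>v c)"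
      by (rule assoc_mult_mat_vec) (use N c in \<open>auto simp: krylov_mat_def\<close>)
    then have "(N ^\<^sub>m t * ?W) *\<^sub>v c = 0\<^sub>v n" using N by (auto simp: c(3) intro!: eq_vecI)
    then show ?thesis
      using r c(1) unfolding pow_mat_mult_krylov_mat[OF N v]
      by (auto dest!: arg_cong[of _ _ "\<lambda>w. w $ r"] simp: scalar_prod_def lessThan_atLeast0)
  qed
  have "N ^\<^sub>m r *\<^sub>v v = 0\<^sub>v n" if "j \<le> r" for r
    using that
  proof (induction "k - r" arbitrary: r rule: less_induct)
    case less
    show ?case
    proof (cases "k \<le> r")
      case True
      then have "N ^\<^sub>m r = N ^\<^sub>m (r - k) * 0\<^sub>m n n"
        using pow_mat_add[OF N, of "r - k" k] by (simp add: nil)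
      then show ?thesis using N v by (auto intro!: eq_vecI)
    next
      case False
      have above: "N ^\<^sub>m r' *\<^sub>v v = 0\<^sub>v n" if "r < r'" for r'
        using less.hyps[of r'] that False less.prems by simp
      have "(N ^\<^sub>m r *\<^sub>v v) $ s = 0" if s: "s < n" for s
      proof -
        let ?f = "\<lambda>i. (N ^\<^sub>m (r - j + i) *\<^sub>v v) $ s * c $ i"
        have zero: "?f i = 0" if "i \<in> {..<Suc n} - {j}" for i
          using that below_j above[of "r - j + i"] less.prems s by (cases "i < j") auto
        have "(\<Sum>i<Suc n. ?f i) = ?f j + (\<Sum>i\<in>{..<Suc n} - {j}. ?f i)"
          by (rule sum.remove) (use j in auto)
        also have "(\<Sum>i\<in>{..<Suc n} - {j}. ?f i) = 0" by (rule sum.neutral) (use zero in blast)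
        finally have "?f j = 0" using shifted[OF s, of "r - j"] by simp
        then show ?thesis using j(2) less.prems by simp
      qed
      then show ?thesis using N v by (intro eq_vecI) auto
    qed
  qed
  then show ?thesis using j(1) by simp
qed

lemma nil_mats_pow_dim:
  fixes x :: "'a::field mat"
  assumes "x \<in> nil_mats n"
  shows "x ^\<^sub>m n = 0\<^sub>m n n"
proof -
  obtain k where x: "x \<in> carrier_mat n n" and k: "x ^\<^sub>m k = 0\<^sub>m n n"
    using assms unfolding nil_mats_def by blast
  have "(x ^\<^sub>m n) $$ (i, j) = 0" if "i < n" "j < n" for i j
  proof -
    have "(x ^\<^sub>m n) $$ (i, j) = (x ^\<^sub>m n *\<^sub>v unit_vec n j) $ i" using x that by simp
    then show ?thesis using nilpotent_pow_dim_mult_vec[OF x k unit_vec_carrier] that by simp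
  qed
  then show ?thesis using x by (intro eq_matI) auto
qed

lemma is_morphism_geom_series_mat:
  assumes "is_morphism n X F"
  shows "is_morphism n X (\<lambda>A. geom_series_mat (F A) k)"
proof (induction k)
  case 0
  then show ?case by (simp add: is_morphism_const)
next
  case (Suc k)
  then show ?case by (simp add: is_morphism_add is_morphism_const is_morphism_mult assms)
qed

section \<open>The Frobenius maps\<close>

lemma frob_g_dim [simp]: "dim_row (frob_g n q A) = n" "dim_col (frob_g n q A) = n"
  unfolding frob_g_def by simp_all

lemma frob_g_carrier: "frob_g n q A \<in> carrier_mat n n"
  unfolding frob_g_def by simp

lemma frob_g_index:
  "i < n \<Longrightarrow> j < n \<Longrightarrow> frob_g n q A $$ (i, j) = (A $$ (n - 1 - j, n - 1 - i)) ^ q"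
  unfolding frob_g_def by simp

lemma frob_g_smult:
  fixes A :: "'a::field mat"
  assumes "A \<in> carrier_mat n n"
  shows "frob_g n q (c \<cdot>\<^sub>m A) = c ^ q \<cdot>\<^sub>m frob_g n q A"
  using assms by (intro eq_matI) (auto simp: frob_g_index power_mult_distrib)

lemma frob_G_eq_mat_inv: "frob_G n q g = mat_inv (frob_g n q g)"
  unfolding frob_G_def frob_g_def ..

context
  fixes e q :: nat
  assumes char_prime: "prime CHAR('a::field)" and q_eq: "q = CHAR('a) ^ e"
begin

lemma power_q_diff: "(x - y :: 'a) ^ q = x ^ q - y ^ q"
  using freshmans_dream'[OF char_prime q_eq, of "x - y" y] by simp

lemma frob_g_diff:
  fixes A B :: "'a mat"
  assumes "A \<in> carrier_mat n n" and "B \<in> carrier_mat n n"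
  shows "frob_g n q (A - B) = frob_g n q A - frob_g n q B"
  using assms by (intro eq_matI) (auto simp: frob_g_index power_q_diff)

lemma frob_g_one: "frob_g n q (1\<^sub>m n :: 'a mat) = 1\<^sub>m n"
proof (rule eq_matI)
  have "q > 0" using char_prime prime_gt_0_nat q_eq by simp
  moreover fix i j assume "i < dim_row (1\<^sub>m n :: 'a mat)" and "j < dim_col (1\<^sub>m n :: 'a mat)"
  ultimately show "frob_g n q (1\<^sub>m n) $$ (i, j) = (1\<^sub>m n :: 'a mat) $$ (i, j)"
    by (auto simp: frob_g_index)
qed auto

lemma frob_g_mult:
  fixes A B :: "'a mat"
  assumes A: "A \<in> carrier_mat n n" and B: "B \<in> carrier_mat n n"
  shows "frob_g n q (A * B) = frob_g n q B * frob_g n q A"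
proof (rule eq_matI)
  fix i j assume "i < dim_row (frob_g n q B * frob_g n q A)" and "j < dim_col (frob_g n q B * frob_g n q A)"
  then have i: "i < n" and j: "j < n" by auto
  have "frob_g n q (A * B) $$ (i, j) = (\<Sum>k<n. A $$ (n - 1 - j, k) * B $$ (k, n - 1 - i)) ^ q"
    using A B i j by (simp add: frob_g_index scalar_prod_def lessThan_atLeast0)
  also have "\<dots> = (\<Sum>k<n. (A $$ (n - 1 - j, k)) ^ q * (B $$ (k, n - 1 - i)) ^ q)"
    by (simp add: freshmans_dream_sum'[OF char_prime q_eq] power_mult_distrib)
  also have "\<dots> = (\<Sum>l<n. (A $$ (n - 1 - j, n - 1 - l)) ^ q * (B $$ (n - 1 - l, n - 1 - i)) ^ q)"
    by (rule sum.reindex_bij_witness[where i="\<lambda>k. n - 1 - k" and j="\<lambda>k. n - 1 - k"]) auto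
  also have "\<dots> = (frob_g n q B * frob_g n q A) $$ (i, j)"
    using i j by (simp add: frob_g_index scalar_prod_def lessThan_atLeast0 mult.commute)
  finally show "frob_g n q (A * B) $$ (i, j) = (frob_g n q B * frob_g n q A) $$ (i, j)" .
qed auto

lemma
  fixes A :: "'a mat"
  assumes A: "A \<in> carrier_mat n n" "det A \<noteq> 0"
  shows det_frob_g_nonzero: "det (frob_g n q A) \<noteq> 0"
    and frob_g_mat_inv: "frob_g n q (mat_inv A) = mat_inv (frob_g n q A)"
proof -
  have inv: "frob_g n q A * frob_g n q (mat_inv A) = 1\<^sub>m n"
    using frob_g_mult[OF mat_inv_carrier[OF A] A(1)] by (simp add: mat_inv_mult[OF A] frob_g_one)
  show "det (frob_g n q A) \<noteq> 0" by (rule det_nonzero_if_right_inverse[OF frob_g_carrier frob_g_carrier inv])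
  show "frob_g n q (mat_inv A) = mat_inv (frob_g n q A)"
    by (rule mat_inv_eqI[OF frob_g_carrier frob_g_carrier inv, symmetric])
qed

end

section \<open>The map \<open>s\<close>\<close>

lemma uni_mats_carrier: "g \<in> uni_mats n \<Longrightarrow> g \<in> carrier_mat n n"
  unfolding uni_mats_def by blast

lemma uni_mats_minus_one: "g \<in> uni_mats n \<Longrightarrow> g - 1\<^sub>m n \<in> nil_mats n"
  unfolding uni_mats_def by blast

lemma
  fixes g :: "'a::field mat"
  assumes g: "g \<in> uni_mats n" and ab: "a \<noteq> b"
  shows det_scalar_minus_smult_uni: "det (a \<cdot>\<^sub>m 1\<^sub>m n - b \<cdot>\<^sub>m g) \<noteq> 0"
    and mat_inv_scalar_minus_smult_uni: "mat_inv (a \<cdot>\<^sub>m 1\<^sub>m n - b \<cdot>\<^sub>m g)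
      = (1 / (a - b)) \<cdot>\<^sub>m geom_series_mat ((1 / (a - b)) \<cdot>\<^sub>m (b \<cdot>\<^sub>m (g - 1\<^sub>m n))) n"
proof -
  let ?N = "b \<cdot>\<^sub>m (g - 1\<^sub>m n)"
  have gc: "g \<in> carrier_mat n n" by (rule uni_mats_carrier[OF g])
  have nil: "?N \<in> nil_mats n" by (rule nil_mats_smult[OF uni_mats_minus_one[OF g]])
  then have N: "?N \<in> carrier_mat n n" "?N ^\<^sub>m n = 0\<^sub>m n n"
    using nil_mats_pow_dim[OF nil] unfolding nil_mats_def by auto
  have "a \<cdot>\<^sub>m 1\<^sub>m n - b \<cdot>\<^sub>m g = (a - b) \<cdot>\<^sub>m 1\<^sub>m n - ?N"
    using gc by (auto intro!: eq_matI simp: algebra_simps)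
  moreover have "a - b \<noteq> 0" using ab by simp
  ultimately show "det (a \<cdot>\<^sub>m 1\<^sub>m n - b \<cdot>\<^sub>m g) \<noteq> 0"
    and "mat_inv (a \<cdot>\<^sub>m 1\<^sub>m n - b \<cdot>\<^sub>m g) = (1 / (a - b)) \<cdot>\<^sub>m geom_series_mat ((1 / (a - b)) \<cdot>\<^sub>m ?N) n"
    using det_scalar_minus_nilpotent[OF N] mat_inv_scalar_minus_nilpotent[OF N] by simp_all
qed

lemma det_uni_mats_nonzero:
  fixes g :: "'a::field mat"
  assumes g: "g \<in> uni_mats n"
  shows "det g \<noteq> 0"
proof -
  have "0 \<cdot>\<^sub>m 1\<^sub>m n - (- 1) \<cdot>\<^sub>m g = g"
    using uni_mats_carrier[OF g] by (auto intro!: eq_matI)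
  then show ?thesis using det_scalar_minus_smult_uni[OF g, of 0 "- 1"] by simp
qed

lemma s_inv_map_minus_one:
  fixes x :: "'a::field mat"
  assumes x: "x \<in> nil_mats n"
  shows "s_inv_map n q \<alpha> x - 1\<^sub>m n = (\<alpha> - \<alpha> ^ q) \<cdot>\<^sub>m (x * mat_inv (1\<^sub>m n + \<alpha> ^ q \<cdot>\<^sub>m x))"
proof -
  let ?E = "1\<^sub>m n + \<alpha> ^ q \<cdot>\<^sub>m x" and ?C = "mat_inv (1\<^sub>m n + \<alpha> ^ q \<cdot>\<^sub>m x)"
  have xc: "x \<in> carrier_mat n n" using x unfolding nil_mats_def by blast
  have E: "?E \<in> carrier_mat n n" "det ?E \<noteq> 0" using xc det_one_plus_smult_nil_mats[OF x] by simp_all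
  have C: "?C \<in> carrier_mat n n" by (rule mat_inv_carrier[OF E])
  have "s_inv_map n q \<alpha> x - 1\<^sub>m n = ?C * (\<alpha> \<cdot>\<^sub>m x + 1\<^sub>m n) - ?C * ?E"
    unfolding s_inv_map_def mat_inv_mult[OF E] ..
  also have "\<dots> = ?C * ((\<alpha> \<cdot>\<^sub>m x + 1\<^sub>m n) - ?E)"
    by (rule mult_minus_distrib_mat[symmetric]) (use C xc in auto)
  also have "(\<alpha> \<cdot>\<^sub>m x + 1\<^sub>m n) - ?E = (\<alpha> - \<alpha> ^ q) \<cdot>\<^sub>m x"
    using xc by (auto intro!: eq_matI simp: algebra_simps)
  also have "?C * ((\<alpha> - \<alpha> ^ q) \<cdot>\<^sub>m x) = (\<alpha> - \<alpha> ^ q) \<cdot>\<^sub>m (x * ?C)"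
    using C xc by (simp add: mult_smult_distrib[of _ n n _ n] mat_inv_one_plus_smult_nil_mats_commute[OF x])
  finally show ?thesis .
qed

lemma scalar_minus_smult_s_inv_map:
  fixes x :: "'a::field mat"
  assumes x: "x \<in> nil_mats n"
  shows "\<alpha> \<cdot>\<^sub>m 1\<^sub>m n - \<alpha> ^ q \<cdot>\<^sub>m s_inv_map n q \<alpha> x = (\<alpha> - \<alpha> ^ q) \<cdot>\<^sub>m mat_inv (1\<^sub>m n + \<alpha> ^ q \<cdot>\<^sub>m x)"
proof -
  let ?E = "1\<^sub>m n + \<alpha> ^ q \<cdot>\<^sub>m x" and ?C = "mat_inv (1\<^sub>m n + \<alpha> ^ q \<cdot>\<^sub>m x)"
  have xc: "x \<in> carrier_mat n n" using x unfolding nil_mats_def by blast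
  have E: "?E \<in> carrier_mat n n" "det ?E \<noteq> 0" using xc det_one_plus_smult_nil_mats[OF x] by simp_all
  have C: "?C \<in> carrier_mat n n" by (rule mat_inv_carrier[OF E])
  have "\<alpha> \<cdot>\<^sub>m 1\<^sub>m n - \<alpha> ^ q \<cdot>\<^sub>m s_inv_map n q \<alpha> x
      = ?C * (\<alpha> \<cdot>\<^sub>m ?E) - ?C * (\<alpha> ^ q \<cdot>\<^sub>m (\<alpha> \<cdot>\<^sub>m x + 1\<^sub>m n))"
    unfolding s_inv_map_def using C xc E
    by (simp add: mult_smult_distrib[of _ n n _ n] mat_inv_mult[OF E])
  also have "\<dots> = ?C * (\<alpha> \<cdot>\<^sub>m ?E - \<alpha> ^ q \<cdot>\<^sub>m (\<alpha> \<cdot>\<^sub>m x + 1\<^sub>m n))"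
    by (rule mult_minus_distrib_mat[symmetric]) (use C xc in auto)
  also have "\<alpha> \<cdot>\<^sub>m ?E - \<alpha> ^ q \<cdot>\<^sub>m (\<alpha> \<cdot>\<^sub>m x + 1\<^sub>m n) = (\<alpha> - \<alpha> ^ q) \<cdot>\<^sub>m 1\<^sub>m n"
    using xc by (auto intro!: eq_matI simp: algebra_simps)
  also have "?C * ((\<alpha> - \<alpha> ^ q) \<cdot>\<^sub>m 1\<^sub>m n) = (\<alpha> - \<alpha> ^ q) \<cdot>\<^sub>m ?C"
    using C by (simp add: mult_smult_distrib[of _ n n _ n])
  finally show ?thesis .
qed

lemma s_map_mat_inv:
  fixes k :: "'a::field mat"
  assumes k: "k \<in> carrier_mat n n" "det k \<noteq> 0" and D: "det (\<alpha> ^ q \<cdot>\<^sub>m 1\<^sub>m n - \<alpha> \<cdot>\<^sub>m k) \<noteq> 0"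
  shows "s_map n q \<alpha> (mat_inv k) = (k - 1\<^sub>m n) * mat_inv (\<alpha> ^ q \<cdot>\<^sub>m 1\<^sub>m n - \<alpha> \<cdot>\<^sub>m k)"
proof -
  let ?d = "\<alpha> ^ q" and ?k' = "mat_inv k"
  let ?D = "?d \<cdot>\<^sub>m 1\<^sub>m n - \<alpha> \<cdot>\<^sub>m k" and ?K = "mat_inv (?d \<cdot>\<^sub>m 1\<^sub>m n - \<alpha> \<cdot>\<^sub>m k)"
  have k': "?k' \<in> carrier_mat n n" by (rule mat_inv_carrier[OF k])
  have Dc: "?D \<in> carrier_mat n n" using k by simp
  have K: "?K \<in> carrier_mat n n" by (rule mat_inv_carrier[OF Dc D])
  have "(\<alpha> \<cdot>\<^sub>m 1\<^sub>m n - ?d \<cdot>\<^sub>m ?k') * k = \<alpha> \<cdot>\<^sub>m k - ?d \<cdot>\<^sub>m (?k' * k)"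
    using k k' by (simp add: square_mat_simps)
  also have "\<dots> = (- 1) \<cdot>\<^sub>m ?D"
    unfolding mat_inv_mult[OF k] using k by (auto intro!: eq_matI)
  finally have denominator_k: "(\<alpha> \<cdot>\<^sub>m 1\<^sub>m n - ?d \<cdot>\<^sub>m ?k') * k = (- 1) \<cdot>\<^sub>m ?D" .
  have inv: "mat_inv (\<alpha> \<cdot>\<^sub>m 1\<^sub>m n - ?d \<cdot>\<^sub>m ?k') = (- 1) \<cdot>\<^sub>m (k * ?K)"
  proof (rule mat_inv_eqI)
    have "(\<alpha> \<cdot>\<^sub>m 1\<^sub>m n - ?d \<cdot>\<^sub>m ?k') * ((- 1) \<cdot>\<^sub>m (k * ?K))
        = (- 1) \<cdot>\<^sub>m (((\<alpha> \<cdot>\<^sub>m 1\<^sub>m n - ?d \<cdot>\<^sub>m ?k') * k) * ?K)"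
      using k k' K by (simp add: mult_smult_distrib[of _ n n _ n] assoc_mult_mat[of _ n n _ n _ n])
    also have "\<dots> = (- 1) \<cdot>\<^sub>m ((- 1) \<cdot>\<^sub>m (?D * ?K))"
      unfolding denominator_k using Dc K by (simp add: mult_smult_assoc_mat[of _ n n _ n])
    also have "\<dots> = 1\<^sub>m n" unfolding mult_mat_inv[OF Dc D] by (auto intro!: eq_matI)
    finally show "(\<alpha> \<cdot>\<^sub>m 1\<^sub>m n - ?d \<cdot>\<^sub>m ?k') * ((- 1) \<cdot>\<^sub>m (k * ?K)) = 1\<^sub>m n" .
  qed (use k' k K in auto)
  have "s_map n q \<alpha> ?k' = (- 1) \<cdot>\<^sub>m ((?k' - 1\<^sub>m n) * (k * ?K))"
    unfolding s_map_def inv using k k' K by (simp add: mult_smult_distrib[of _ n n _ n])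
  also have "(?k' - 1\<^sub>m n) * (k * ?K) = ?K - k * ?K"
    using k k' K by (simp add: square_mat_simps mat_inv_mult[OF k] flip: assoc_mult_mat[of ?k' n n k n ?K n])
  also have "(- 1) \<cdot>\<^sub>m (?K - k * ?K) = (k - 1\<^sub>m n) * ?K"
    using k K by (simp add: square_mat_simps) (auto intro!: eq_matI)
  finally show ?thesis .
qed

context
  fixes q :: nat and \<alpha> :: "'a::field"
  assumes not_fixed: "\<alpha> ^ q \<noteq> \<alpha>"
begin

lemma s_map_denominator:
  assumes g: "g \<in> uni_mats n"
  defines "A \<equiv> \<alpha> \<cdot>\<^sub>m 1\<^sub>m n - \<alpha> ^ q \<cdot>\<^sub>m g"
  shows "A \<in> carrier_mat n n" "det A \<noteq> 0" "g * mat_inv A = mat_inv A * g"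
    "(g - 1\<^sub>m n) * mat_inv A = mat_inv A * (g - 1\<^sub>m n)"
proof -
  have gc: "g \<in> carrier_mat n n" by (rule uni_mats_carrier[OF g])
  show A: "A \<in> carrier_mat n n" "det A \<noteq> 0"
    unfolding A_def using gc det_scalar_minus_smult_uni[OF g] not_fixed by (auto simp: minus_carrier_mat)
  show gB: "g * mat_inv A = mat_inv A * g"
    using mat_inv_commute[OF A gc] mult_commute_scalar_minus_smult[OF gc] unfolding A_def by blast
  show "(g - 1\<^sub>m n) * mat_inv A = mat_inv A * (g - 1\<^sub>m n)"
    using gc mat_inv_carrier[OF A] by (simp add: square_mat_simps gB)
qed

lemma s_map_nil_mats:
  assumes g: "g \<in> uni_mats n"
  shows "s_map n q \<alpha> g \<in> nil_mats n"
  unfolding s_map_def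
  using nil_mats_mult_commute[OF uni_mats_minus_one[OF g]] s_map_denominator[OF g]
    mat_inv_carrier by blast

lemma s_inv_map_s_map:
  assumes g: "g \<in> uni_mats n"
  shows "s_inv_map n q \<alpha> (s_map n q \<alpha> g) = g"
proof -
  let ?c = "\<alpha> - \<alpha> ^ q" and ?A = "\<alpha> \<cdot>\<^sub>m 1\<^sub>m n - \<alpha> ^ q \<cdot>\<^sub>m g"
  let ?B = "mat_inv ?A"
  note A = s_map_denominator(1,2)[OF g] and gB = s_map_denominator(3)[OF g]
  have gc: "g \<in> carrier_mat n n" by (rule uni_mats_carrier[OF g])
  have B: "?B \<in> carrier_mat n n" by (rule mat_inv_carrier[OF A])
  have c: "?c \<noteq> 0" using not_fixed by simp
  have N: "g - 1\<^sub>m n \<in> carrier_mat n n" using gc by simp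
  have "1\<^sub>m n + \<alpha> ^ q \<cdot>\<^sub>m s_map n q \<alpha> g = ?A * ?B + (\<alpha> ^ q \<cdot>\<^sub>m (g - 1\<^sub>m n)) * ?B"
    unfolding s_map_def mult_mat_inv[OF A] using N B by (simp add: mult_smult_assoc_mat[of _ n n _ n])
  also have "\<dots> = (?A + \<alpha> ^ q \<cdot>\<^sub>m (g - 1\<^sub>m n)) * ?B"
    by (rule add_mult_distrib_mat[symmetric]) (use A N B in auto)
  also have "?A + \<alpha> ^ q \<cdot>\<^sub>m (g - 1\<^sub>m n) = ?c \<cdot>\<^sub>m 1\<^sub>m n"
    using gc by (auto intro!: eq_matI simp: algebra_simps)
  finally have denominator: "1\<^sub>m n + \<alpha> ^ q \<cdot>\<^sub>m s_map n q \<alpha> g = ?c \<cdot>\<^sub>m ?B"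
    using B by (simp add: mult_smult_assoc_mat[of _ n n _ n])
  have "\<alpha> \<cdot>\<^sub>m s_map n q \<alpha> g + 1\<^sub>m n = (\<alpha> \<cdot>\<^sub>m (g - 1\<^sub>m n)) * ?B + ?A * ?B"
    unfolding s_map_def mult_mat_inv[OF A] using N B by (simp add: mult_smult_assoc_mat[of _ n n _ n])
  also have "\<dots> = (\<alpha> \<cdot>\<^sub>m (g - 1\<^sub>m n) + ?A) * ?B"
    by (rule add_mult_distrib_mat[symmetric]) (use A N B in auto)
  also have "\<alpha> \<cdot>\<^sub>m (g - 1\<^sub>m n) + ?A = ?c \<cdot>\<^sub>m g"
    using gc by (auto intro!: eq_matI simp: algebra_simps)
  finally have numerator: "\<alpha> \<cdot>\<^sub>m s_map n q \<alpha> g + 1\<^sub>m n = ?c \<cdot>\<^sub>m (g * ?B)"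
    using gc B by (simp add: mult_smult_assoc_mat[of _ n n _ n])
  have "s_inv_map n q \<alpha> (s_map n q \<alpha> g) = mat_inv (?c \<cdot>\<^sub>m ?B) * (?c \<cdot>\<^sub>m (g * ?B))"
    unfolding s_inv_map_def denominator numerator ..
  also have "mat_inv (?c \<cdot>\<^sub>m ?B) = (1 / ?c) \<cdot>\<^sub>m ?A"
    using mat_inv_smult[OF B det_mat_inv_nonzero[OF A] c] by (simp add: mat_inv_mat_inv[OF A])
  also have "(1 / ?c) \<cdot>\<^sub>m ?A * (?c \<cdot>\<^sub>m (g * ?B)) = ?A * (?B * g)"
    using A gc B c by (simp add: smult_mult_smult_mat gB one_smult_mat)
  also have "\<dots> = (?A * ?B) * g" using A gc B by (simp add: assoc_mult_mat[of _ n n _ n _ n])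
  also have "\<dots> = g" using gc by (simp add: mult_mat_inv[OF A])
  finally show ?thesis .
qed

lemma s_inv_map_nil_mats:
  assumes x: "x \<in> nil_mats n"
  shows "s_inv_map n q \<alpha> x \<in> uni_mats n" and "s_map n q \<alpha> (s_inv_map n q \<alpha> x) = x"
proof -
  let ?c = "\<alpha> - \<alpha> ^ q" and ?E = "1\<^sub>m n + \<alpha> ^ q \<cdot>\<^sub>m x" and ?y = "s_inv_map n q \<alpha> x"
  let ?C = "mat_inv ?E"
  have c: "?c \<noteq> 0" using not_fixed by simp
  have xc: "x \<in> carrier_mat n n" using x unfolding nil_mats_def by blast
  have E: "?E \<in> carrier_mat n n" "det ?E \<noteq> 0" using xc det_one_plus_smult_nil_mats[OF x] by simp_all
  have C: "?C \<in> carrier_mat n n" by (rule mat_inv_carrier[OF E])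
  have y: "?y \<in> carrier_mat n n" unfolding s_inv_map_def using C xc by simp
  note xC = mat_inv_one_plus_smult_nil_mats_commute[OF x]
  have "?c \<cdot>\<^sub>m (x * ?C) \<in> nil_mats n" by (rule nil_mats_smult[OF nil_mats_mult_commute[OF x C xC]])
  then have "?y - 1\<^sub>m n \<in> nil_mats n" by (simp only: s_inv_map_minus_one[OF x])
  then show "?y \<in> uni_mats n" unfolding uni_mats_def using y by blast
  have "s_map n q \<alpha> ?y = (?c \<cdot>\<^sub>m (x * ?C)) * mat_inv (?c \<cdot>\<^sub>m ?C)"
    unfolding s_map_def s_inv_map_minus_one[OF x] scalar_minus_smult_s_inv_map[OF x] ..
  also have "mat_inv (?c \<cdot>\<^sub>m ?C) = (1 / ?c) \<cdot>\<^sub>m ?E"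
    using mat_inv_smult[OF C det_mat_inv_nonzero[OF E] c] by (simp add: mat_inv_mat_inv[OF E])
  also have "(?c \<cdot>\<^sub>m (x * ?C)) * ((1 / ?c) \<cdot>\<^sub>m ?E) = x * (?C * ?E)"
    using C xc E c by (simp add: smult_mult_smult_mat one_smult_mat assoc_mult_mat[of _ n n _ n _ n])
  also have "\<dots> = x" using xc by (simp add: mat_inv_mult[OF E])
  finally show "s_map n q \<alpha> ?y = x" .
qed

lemma s_map_conj:
  assumes h: "h \<in> GL n" and g: "g \<in> uni_mats n"
  shows "s_map n q \<alpha> (h * g * mat_inv h) = h * s_map n q \<alpha> g * mat_inv h"
proof -
  let ?H = "mat_inv h" and ?A = "\<alpha> \<cdot>\<^sub>m 1\<^sub>m n - \<alpha> ^ q \<cdot>\<^sub>m g"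
  note hc = GL_D[OF h] and A = s_map_denominator(1,2)[OF g]
  have gc: "g \<in> carrier_mat n n" by (rule uni_mats_carrier[OF g])
  have H: "?H \<in> carrier_mat n n" by (rule mat_inv_carrier[OF hc])
  have numerator: "h * g * ?H - 1\<^sub>m n = h * (g - 1\<^sub>m n) * ?H"
    using hc gc H by (simp add: square_mat_simps mult_mat_inv[OF hc])
  have denominator: "\<alpha> \<cdot>\<^sub>m 1\<^sub>m n - \<alpha> ^ q \<cdot>\<^sub>m (h * g * ?H) = h * ?A * ?H"
    using hc gc H by (simp add: square_mat_simps mult_mat_inv[OF hc])
  have "s_map n q \<alpha> (h * g * ?H) = (h * (g - 1\<^sub>m n) * ?H) * mat_inv (h * ?A * ?H)"
    unfolding s_map_def numerator denominator ..
  also have "mat_inv (h * ?A * ?H) = h * mat_inv ?A * ?H" by (rule mat_inv_conj[OF hc A])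
  also have "(h * (g - 1\<^sub>m n) * ?H) * (h * mat_inv ?A * ?H) = h * s_map n q \<alpha> g * ?H"
    unfolding s_map_def using hc gc H mat_inv_carrier[OF A]
    by (intro conj_mult_conj) (auto simp: mat_inv_mult[OF hc])
  finally show ?thesis .
qed

lemma s_map_is_morphism: "is_morphism n (uni_mats n) (s_map n q \<alpha>)"
proof -
  let ?c = "\<alpha> - \<alpha> ^ q"
  have uni: "(uni_mats n :: 'a mat set) \<subseteq> carrier_mat n n" using uni_mats_carrier by blast
  have N: "is_morphism n (uni_mats n) (\<lambda>g :: 'a mat. g - 1\<^sub>m n)"
    using is_morphism_diff[OF is_morphism_id[OF uni] is_morphism_const[OF one_carrier_mat]] by simp
  have "is_morphism n (uni_mats n) (\<lambda>g. (g - 1\<^sub>m n) *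
      ((1 / ?c) \<cdot>\<^sub>m geom_series_mat ((1 / ?c) \<cdot>\<^sub>m (\<alpha> ^ q \<cdot>\<^sub>m (g - 1\<^sub>m n))) n))"
    by (rule is_morphism_mult[OF N is_morphism_smult[OF is_morphism_geom_series_mat[OF
          is_morphism_smult[OF is_morphism_smult[OF N]]]]])
  then show ?thesis
  proof (rule is_morphism_cong)
    fix g :: "'a mat" assume g: "g \<in> uni_mats n"
    have ne: "\<alpha> \<noteq> \<alpha> ^ q" using not_fixed by simp
    show "s_map n q \<alpha> g = (g - 1\<^sub>m n) *
        ((1 / ?c) \<cdot>\<^sub>m geom_series_mat ((1 / ?c) \<cdot>\<^sub>m (\<alpha> ^ q \<cdot>\<^sub>m (g - 1\<^sub>m n))) n)"
      unfolding s_map_def by (simp only: mat_inv_scalar_minus_smult_uni[OF g ne])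
  qed
qed

lemma s_map_frob:
  assumes char: "prime CHAR('a)" and q_eq: "q = CHAR('a) ^ e" and period: "\<alpha> ^ (q ^ 2) = \<alpha>"
    and g: "g \<in> uni_mats n"
  shows "s_map n q \<alpha> (frob_G n q g) = frob_g n q (s_map n q \<alpha> g)"
proof -
  let ?A = "\<alpha> \<cdot>\<^sub>m 1\<^sub>m n - \<alpha> ^ q \<cdot>\<^sub>m g" and ?k = "frob_g n q g"
  let ?K = "frob_g n q (mat_inv ?A)"
  note A = s_map_denominator(1,2)[OF g] and gB = s_map_denominator(3)[OF g]
  have gc: "g \<in> carrier_mat n n" by (rule uni_mats_carrier[OF g])
  have B: "mat_inv ?A \<in> carrier_mat n n" by (rule mat_inv_carrier[OF A])
  have k: "?k \<in> carrier_mat n n" "det ?k \<noteq> 0"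
    using frob_g_carrier det_frob_g_nonzero[OF char q_eq gc det_uni_mats_nonzero[OF g]] by auto
  have "(\<alpha> ^ q) ^ q = \<alpha>" using period by (simp add: power2_eq_square power_mult)
  then have frob_A: "frob_g n q ?A = \<alpha> ^ q \<cdot>\<^sub>m 1\<^sub>m n - \<alpha> \<cdot>\<^sub>m ?k"
    using gc by (simp add: frob_g_diff[OF char q_eq] frob_g_smult frob_g_one[OF char q_eq])
  have K: "?K \<in> carrier_mat n n" by (rule frob_g_carrier)
  have kK: "?k * ?K = ?K * ?k"
    using frob_g_mult[OF char q_eq gc B] frob_g_mult[OF char q_eq B gc] gB by simp
  have "s_map n q \<alpha> (frob_G n q g) = (?k - 1\<^sub>m n) * ?K"
    using s_map_mat_inv[OF k] det_frob_g_nonzero[OF char q_eq A] frob_g_mat_inv[OF char q_eq A]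
    unfolding frob_G_eq_mat_inv frob_A by simp
  also have "\<dots> = ?K * (?k - 1\<^sub>m n)" using k K by (simp add: square_mat_simps kK)
  also have "\<dots> = frob_g n q (s_map n q \<alpha> g)"
    unfolding s_map_def using gc B
    by (simp add: frob_g_mult[OF char q_eq] frob_g_diff[OF char q_eq] frob_g_one[OF char q_eq])
  finally show ?thesis .
qed

end

end

theorem mainTheorem2:
  fixes p q e n :: nat and \<alpha> :: "'k::alg_closed_field"
  assumes "prime p" and "CHAR('k) = p" and "e \<ge> 1" and "q = p ^ e"
    and "\<alpha> ^ (q^2) = \<alpha>" and "\<alpha> ^ q \<noteq> \<alpha>"
  shows "bij_betw (s_map n q \<alpha>) (uni_mats n) (nil_mats n :: 'k mat set)
    \<and> is_morphism n (uni_mats n) (s_map n q \<alpha>)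
    \<and> (\<forall>h\<in>GL n. \<forall>g\<in>uni_mats n.
          s_map n q \<alpha> (h * g * mat_inv h) = h * s_map n q \<alpha> g * mat_inv h)
    \<and> (\<forall>g\<in>uni_mats n. s_inv_map n q \<alpha> (s_map n q \<alpha> g) = g)
    \<and> (\<forall>x\<in>nil_mats n. s_inv_map n q \<alpha> x \<in> uni_mats n \<and> s_map n q \<alpha> (s_inv_map n q \<alpha> x) = x)
    \<and> (\<forall>g\<in>uni_mats n. s_map n q \<alpha> (frob_G n q g) = frob_g n q (s_map n q \<alpha> g))"
proof -
  note not_fixed = \<open>\<alpha> ^ q \<noteq> \<alpha>\<close>
  have char: "prime CHAR('k)" and q_eq: "q = CHAR('k) ^ e" using assms(1,2,4) by simp_all
  have "bij_betw (s_map n q \<alpha>) (uni_mats n) (nil_mats n :: 'k mat set)"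
    by (rule bij_betw_byWitness[where f' = "s_inv_map n q \<alpha>"])
      (use s_inv_map_s_map[OF not_fixed] s_inv_map_nil_mats[OF not_fixed] s_map_nil_mats[OF not_fixed] in auto)
  then show ?thesis
    using s_map_is_morphism[OF not_fixed] s_map_conj[OF not_fixed] s_inv_map_s_map[OF not_fixed]
      s_inv_map_nil_mats[OF not_fixed] s_map_frob[OF not_fixed char q_eq assms(5)]
    by blast
qed

end
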